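(* Let $\gamma\in\Gamma$, $d=e_1+\varepsilon\gamma$, with orientations chosen so that $Vd\ge0$ for small $\varepsilon\ge0$. If $i\in\{1,\dots,m\}$ satisfies $(Ve_1)_i>0$, then for all $\varepsilon>0$ sufficiently small, $$\big(Vg^*(d)\big)_i<(1+\lambda)(Vd)_i.$$
   Context: $\mathcal G$ is a simple connected oriented graph with nodes $\{1,\dots,n\}$, $m$ edges, incidence matrix $C$, PTDF matrix $V=C(C^TC)^+$; $e$ all-ones; $\lambda\in(0,1)$. $\Gamma=\{\gamma\in\mathbb R^n:\gamma_1=0,\gamma\ge0,e^T\gamma=1\}$. $g^*(d)$ is the unique minimizer of $\frac12\sum_ig_i^2$ over $g\in\mathbb R^n_{\ge0}$ with $e^Tg=e^Td$ and $-\lambda|Vd|\le V(d-g)\le\lambda|Vd|$. *)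

theory Defs
  imports "HOL-Analysis.Analysis"
begin

text \<open>Oriented graph: nodes are the elements of a finite type 'n, edges the elements of
a finite type 'm; edge k goes from src k to tgt k.\<close>

definition simple_oriented_graph :: "('m \<Rightarrow> 'n) \<Rightarrow> ('m \<Rightarrow> 'n) \<Rightarrow> bool" where
  "simple_oriented_graph src tgt \<longleftrightarrow>
     (\<forall>k. src k \<noteq> tgt k) \<and>
     (\<forall>k k'. {src k, tgt k} = {src k', tgt k'} \<longrightarrow> k = k')"

definition adjacent :: "('m \<Rightarrow> 'n) \<Rightarrow> ('m \<Rightarrow> 'n) \<Rightarrow> 'n \<Rightarrow> 'n \<Rightarrow> bool" where
  "adjacent src tgt u v \<longleftrightarrow> (\<exists>k. (src k = u \<and> tgt k = v) \<or> (src k = v \<and> tgt k = u))"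

definition connected_graph :: "('m \<Rightarrow> 'n) \<Rightarrow> ('m \<Rightarrow> 'n) \<Rightarrow> bool" where
  "connected_graph src tgt \<longleftrightarrow> (\<forall>u v. (adjacent src tgt)\<^sup>*\<^sup>* u v)"

definition incidence :: "('m \<Rightarrow> 'n) \<Rightarrow> ('m \<Rightarrow> 'n) \<Rightarrow> real^'n^'m" where
  "incidence src tgt = (\<chi> k j. if j = src k then 1 else if j = tgt k then -1 else 0)"

definition pinv :: "real^'a^'b \<Rightarrow> real^'b^'a" where
  "pinv A = (THE X. A ** X ** A = A \<and> X ** A ** X = X \<and>
                    transpose (A ** X) = A ** X \<and> transpose (X ** A) = X ** A)"

definition ptdf :: "('m \<Rightarrow> 'n) \<Rightarrow> ('m \<Rightarrow> 'n) \<Rightarrow> real^'n^'m" where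
  "ptdf src tgt = incidence src tgt ** pinv (transpose (incidence src tgt) ** incidence src tgt)"

definition vabs :: "real^'m \<Rightarrow> real^'m" where
  "vabs x = (\<chi> k. \<bar>x $ k\<bar>)"

definition feasible :: "real^'n^'m \<Rightarrow> real \<Rightarrow> real^'n \<Rightarrow> (real^'n) set" where
  "feasible V lam d = {g. (\<forall>j. g $ j \<ge> 0) \<and> sum (\<lambda>j. g $ j) UNIV = sum (\<lambda>j. d $ j) UNIV \<and>
      (\<forall>k. - lam * \<bar>(V *v d) $ k\<bar> \<le> (V *v (d - g)) $ k \<and>
            (V *v (d - g)) $ k \<le> lam * \<bar>(V *v d) $ k\<bar>)}"

definition gstar :: "real^'n^'m \<Rightarrow> real \<Rightarrow> real^'n \<Rightarrow> real^'n" where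
  "gstar V lam d = (THE g. g \<in> feasible V lam d \<and>
      (\<forall>h\<in>feasible V lam d. (1/2) * (\<Sum>j\<in>UNIV. (g $ j)\<^sup>2) \<le> (1/2) * (\<Sum>j\<in>UNIV. (h $ j)\<^sup>2)))"

definition Gamma_set :: "'n \<Rightarrow> (real^'n) set" where
  "Gamma_set n1 = {\<gamma>. \<gamma> $ n1 = 0 \<and> (\<forall>j. \<gamma> $ j \<ge> 0) \<and> sum (\<lambda>j. \<gamma> $ j) UNIV = 1}"

end

theory Submission
  imports Defs
begin

text \<open>Write \<open>p(d) = (1 - \<lambda>) d + (\<lambda> e\<^sup>Td / n) e\<close> for the proportional dispatch. As \<open>\<epsilon> \<rightarrow> 0\<close>
  the optimal dispatch \<open>g\<^sup>*(e\<^sub>1 + \<epsilon>\<gamma>)\<close> converges to \<open>p(e\<^sub>1)\<close>, whose line flows are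
  \<open>(1 - \<lambda>) V e\<^sub>1\<close> because \<open>V e = 0\<close>; in a component with \<open>(V e\<^sub>1)\<^sub>i > 0\<close> this is strictly below
  the limit \<open>(1 + \<lambda>) (V e\<^sub>1)\<^sub>i\<close> of the right-hand side.
  For the convergence, \<open>p(d)\<close> is feasible with the same total as \<open>g\<^sup>*\<close>, so expanding squares
  around \<open>p(e\<^sub>1)\<close> the minimality of \<open>g\<^sup>*\<close> gives
  \<open>\<parallel>g\<^sup>* - p(e\<^sub>1)\<parallel>\<^sup>2 \<le> \<epsilon>\<^sup>2 \<parallel>p(\<gamma>)\<parallel>\<^sup>2 + 2(1 - \<lambda>)(p(d)\<^sub>1 - g\<^sup>*\<^sub>1)\<close>. Kirchhoff's law at node 1 bounds
  \<open>g\<^sup>*\<^sub>1\<close> from below up to the \<open>\<lambda>\<close>-slack on the lines entering node 1, and these carry no flow of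
  \<open>V e\<^sub>1\<close>, so that slack is \<open>O(\<epsilon>)\<close>.\<close>

lemma moore_penrose_unique:
  fixes A :: "real^'a^'b" and X Y :: "real^'b^'a"
  assumes X1: "A ** X ** A = A" and X2: "X ** A ** X = X"
    and X3: "transpose (A ** X) = A ** X" and X4: "transpose (X ** A) = X ** A"
  assumes Y1: "A ** Y ** A = A" and Y2: "Y ** A ** Y = Y"
    and Y3: "transpose (A ** Y) = A ** Y" and Y4: "transpose (Y ** A) = Y ** A"
  shows "X = Y"
proof -
  have tA: "transpose A = transpose A ** transpose Y ** transpose A"
    by (metis Y1 matrix_mul_assoc matrix_transpose_mul)
  have "X = X ** (A ** X)" using X2 by (simp add: matrix_mul_assoc)
  also have "\<dots> = X ** transpose X ** transpose A" using X3
    by (metis matrix_mul_assoc matrix_transpose_mul)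
  also have "\<dots> = X ** transpose X ** transpose A ** transpose Y ** transpose A"
    by (metis tA matrix_mul_assoc)
  also have "\<dots> = X ** (A ** X) ** (A ** Y)"
    by (metis X3 Y3 matrix_mul_assoc matrix_transpose_mul)
  also have "\<dots> = X ** A ** Y" by (metis X2 matrix_mul_assoc)
  finally have XAY: "X = X ** A ** Y" .
  have tA': "transpose A = transpose A ** transpose X ** transpose A"
    by (metis X1 matrix_mul_assoc matrix_transpose_mul)
  have "Y = Y ** A ** Y" using Y2 by simp
  also have "\<dots> = transpose A ** transpose Y ** Y" using Y4
    by (metis matrix_mul_assoc matrix_transpose_mul)
  also have "\<dots> = transpose A ** transpose X ** transpose A ** transpose Y ** Y"
    by (metis tA' matrix_mul_assoc)
  also have "\<dots> = (X ** A) ** (Y ** A) ** Y"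
    by (metis X4 Y4 matrix_mul_assoc matrix_transpose_mul)
  also have "\<dots> = X ** A ** Y" by (metis Y2 matrix_mul_assoc)
  finally show ?thesis using XAY by simp
qed

lemma pinv_eqI:
  fixes A :: "real^'a^'b" and X :: "real^'b^'a"
  assumes "A ** X ** A = A" and "X ** A ** X = X"
    and "transpose (A ** X) = A ** X" and "transpose (X ** A) = X ** A"
  shows "pinv A = X"
  unfolding pinv_def
proof (rule the_equality)
  fix Y assume "A ** Y ** A = A \<and> Y ** A ** Y = Y \<and>
    transpose (A ** Y) = A ** Y \<and> transpose (Y ** A) = Y ** A"
  then show "Y = X" using moore_penrose_unique[of A Y X] assms by simp
qed (use assms in simp)

lemma matrix_add_rdistrib: "((A::real^'a^'b) + B) ** (C::real^'c^'a) = A ** C + B ** C"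
  by (simp add: matrix_matrix_mult_def vec_eq_iff sum.distrib distrib_right)

lemma matrix_diff_rdistrib: "((A::real^'a^'b) - B) ** (C::real^'c^'a) = A ** C - B ** C"
  by (simp add: matrix_matrix_mult_def vec_eq_iff sum_subtractf left_diff_distrib)

lemma matrix_diff_ldistrib: "(C::real^'a^'b) ** ((A::real^'c^'a) - B) = C ** A - C ** B"
  by (simp add: matrix_matrix_mult_def vec_eq_iff sum_subtractf right_diff_distrib)

definition averaging_matrix :: "real^'n^'n" where
  "averaging_matrix = (\<chi> i j. 1 / real CARD('n))"

lemma transpose_averaging_matrix [simp]: "transpose averaging_matrix = averaging_matrix"
  by (simp add: transpose_def averaging_matrix_def vec_eq_iff)

lemma averaging_matrix_idem [simp]:
  "averaging_matrix ** averaging_matrix = (averaging_matrix :: real^'n^'n)"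
  by (simp add: averaging_matrix_def matrix_matrix_mult_def vec_eq_iff)

lemma averaging_matrix_mult_vec:
  "(averaging_matrix *v y) $ j = (\<Sum>k\<in>UNIV. y $ k) / real CARD('n)"
  for y :: "real^'n"
  by (simp add: averaging_matrix_def matrix_vector_mult_def sum_divide_distrib)

lemma incidence_mult_vec:
  assumes "src k \<noteq> tgt k"
  shows "(incidence src tgt *v x) $ k = x $ src k - x $ tgt k"
proof -
  have "(incidence src tgt *v x) $ k
      = (\<Sum>j\<in>UNIV. (if j = src k then x $ j else 0) - (if j = tgt k then x $ j else 0))"
    using assms by (auto simp: matrix_vector_mult_def incidence_def intro!: sum.cong)
  also have "\<dots> = x $ src k - x $ tgt k" by (simp add: sum_subtractf)
  finally show ?thesis .
qed

lemma incidence_mult_averaging_matrix: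
  fixes src tgt :: "'m::finite \<Rightarrow> 'n::finite"
  assumes "\<forall>k. src k \<noteq> tgt k"
  shows "incidence src tgt ** averaging_matrix = 0"
proof -
  have "(incidence src tgt ** averaging_matrix) $ k $ j
      = (incidence src tgt *v (\<chi> l. 1 / real CARD('n))) $ k" for k and j :: 'n
    by (simp add: matrix_matrix_mult_def matrix_vector_mult_def averaging_matrix_def)
  then show ?thesis using assms by (simp add: vec_eq_iff incidence_mult_vec)
qed

lemma averaging_matrix_mult_transpose_incidence:
  assumes "\<forall>k. src k \<noteq> tgt k"
  shows "averaging_matrix ** transpose (incidence src tgt) = 0"
  by (metis assms incidence_mult_averaging_matrix matrix_transpose_mul
      transpose_averaging_matrix transpose_transpose times0_right times0_left)

lemma connected_graph_potential_const:
  assumes conn: "connected_graph src tgt"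
    and flat: "\<And>k. x $ src k = x $ tgt k"
  shows "x $ u = x $ v"
proof -
  have step: "x $ a = x $ b" if "adjacent src tgt a b" for a b
    using that flat unfolding adjacent_def by metis
  have "(adjacent src tgt)\<^sup>*\<^sup>* u v" using conn by (simp add: connected_graph_def)
  then show ?thesis by (induction rule: rtranclp_induct) (auto dest: step)
qed

lemma laplacian_plus_averaging_inj:
  fixes src tgt :: "'m::finite \<Rightarrow> 'n::finite"
  assumes loopfree: "\<forall>k. src k \<noteq> tgt k" and conn: "connected_graph src tgt"
    and zero: "(transpose (incidence src tgt) ** incidence src tgt + averaging_matrix) *v x = 0"
  shows "x = 0"
proof -
  let ?C = "incidence src tgt" and ?s = "\<Sum>j\<in>UNIV. x $ j"
  have "inner x ((transpose ?C ** ?C) *v x) = inner (?C *v x) (?C *v x)"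
    by (metis dot_lmul_matrix inner_commute matrix_vector_mul_assoc transpose_matrix_vector)
  moreover have "inner x (averaging_matrix *v x) = ?s\<^sup>2 / real CARD('n)"
    by (simp add: inner_vec_def averaging_matrix_mult_vec power2_eq_square
        sum_divide_distrib[symmetric] sum_distrib_right[symmetric])
  moreover have "inner x ((transpose ?C ** ?C + averaging_matrix) *v x) = 0"
    using zero by simp
  ultimately have "inner (?C *v x) (?C *v x) + ?s\<^sup>2 / real CARD('n) = 0"
    by (simp add: matrix_vector_mult_add_rdistrib inner_add_right)
  then have Cx: "?C *v x = 0" and sum0: "?s = 0"
    by (smt (verit) inner_ge_zero inner_eq_zero_iff divide_nonneg_pos zero_le_power2
        of_nat_0_less_iff zero_less_card_finite power_eq_0_iff divide_eq_0_iff)+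
  have const: "x $ u = x $ v" for u v
    using connected_graph_potential_const[OF conn] Cx loopfree
    by (metis incidence_mult_vec right_minus_eq zero_index)
  fix u0 :: 'n
  have "?s = (\<Sum>j::'n\<in>UNIV. x $ u0)" using const by (intro sum.cong) auto
  with sum0 show ?thesis using const[of _ u0] by (simp add: vec_eq_iff)
qed

text \<open>With \<open>L = C\<^sup>T C\<close> and \<open>J\<close> the averaging matrix, \<open>L + J\<close> is invertible and
  \<open>(L + J)\<^sup>-\<^sup>1 - J\<close> is the Moore-Penrose inverse of \<open>L\<close>.\<close>

lemma ptdf_factor:
  fixes src tgt :: "'m::finite \<Rightarrow> 'n::finite"
  assumes loopfree: "\<forall>k. src k \<noteq> tgt k" and conn: "connected_graph src tgt"
  obtains X where "ptdf src tgt = incidence src tgt ** X"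
    and "transpose (incidence src tgt) ** incidence src tgt ** X = mat 1 - averaging_matrix"
    and "X ** averaging_matrix = 0"
proof -
  define C where "C = incidence src tgt"
  define L where "L = transpose C ** C"
  define J where "J = (averaging_matrix :: real^'n^'n)"
  have "\<exists>N. N ** (L + J) = mat 1"
    unfolding matrix_left_invertible_ker L_def C_def J_def
    using laplacian_plus_averaging_inj[OF loopfree conn] by blast
  then obtain N where NM: "N ** (L + J) = mat 1" by blast
  then have MN: "(L + J) ** N = mat 1" using matrix_left_right_inverse by blast
  have LJ: "L ** J = 0"
    by (metis C_def J_def L_def incidence_mult_averaging_matrix[OF loopfree]
        matrix_mul_assoc times0_right)
  have JL: "J ** L = 0"
    by (metis C_def J_def L_def averaging_matrix_mult_transpose_incidence[OF loopfree]
        matrix_mul_assoc times0_left)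
  have JJ: "J ** J = J" by (simp add: J_def)
  have NJ: "N ** J = J"
    by (metis NM JJ LJ matrix_add_rdistrib matrix_mul_assoc matrix_mul_lid add_0)
  have JN: "J ** N = J"
    by (metis MN JJ JL matrix_add_ldistrib matrix_mul_assoc matrix_mul_rid add_0)
  define X where "X = N - J"
  have LX: "L ** X = mat 1 - J"
    using MN JN LJ JJ
    by (simp add: X_def matrix_diff_ldistrib matrix_add_rdistrib flip: eq_diff_eq)
  have XL: "X ** L = mat 1 - J"
    using NM NJ JL JJ
    by (simp add: X_def matrix_diff_rdistrib matrix_add_ldistrib flip: eq_diff_eq)
  have XJ: "X ** J = 0" by (simp add: X_def matrix_diff_rdistrib NJ JJ)
  have sym: "transpose (mat 1 - J) = mat 1 - J"
    by (simp add: J_def transpose_def mat_def averaging_matrix_def vec_eq_iff)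
  have "pinv L = X"
  proof (rule pinv_eqI)
    show "L ** X ** L = L" by (simp add: LX matrix_diff_rdistrib JL)
    show "X ** L ** X = X"
      by (simp add: XL matrix_diff_rdistrib) (simp add: X_def matrix_diff_ldistrib JN JJ)
  qed (simp_all add: LX XL sym)
  then show ?thesis
    using that LX XJ by (simp add: ptdf_def C_def L_def J_def matrix_mul_assoc)
qed

lemma ptdf_kirchhoff:
  fixes src tgt :: "'m::finite \<Rightarrow> 'n::finite"
  assumes "\<forall>k. src k \<noteq> tgt k" and "connected_graph src tgt"
  shows "(\<Sum>k\<in>UNIV. incidence src tgt $ k $ v * (ptdf src tgt *v y) $ k)
           = y $ v - (\<Sum>j\<in>UNIV. y $ j) / real CARD('n)"
proof -
  obtain X where V: "ptdf src tgt = incidence src tgt ** X"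
    and LX: "transpose (incidence src tgt) ** incidence src tgt ** X = mat 1 - averaging_matrix"
    using ptdf_factor[OF assms] .
  have "transpose (incidence src tgt) *v (ptdf src tgt *v y) = (mat 1 - averaging_matrix) *v y"
    by (simp add: V LX matrix_vector_mul_assoc matrix_mul_assoc)
  then have "(transpose (incidence src tgt) *v (ptdf src tgt *v y)) $ v
      = y $ v - (averaging_matrix *v y) $ v"
    by (simp add: matrix_vector_mult_diff_rdistrib)
  then show ?thesis
    unfolding averaging_matrix_mult_vec by (simp add: matrix_vector_mult_def transpose_def)
qed

lemma ptdf_mult_const:
  fixes src tgt :: "'m::finite \<Rightarrow> 'n::finite"
  assumes "\<forall>k. src k \<noteq> tgt k" and "connected_graph src tgt"
  shows "ptdf src tgt *v (\<chi> j. c) = 0"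
proof -
  obtain X where V: "ptdf src tgt = incidence src tgt ** X" and XJ: "X ** averaging_matrix = 0"
    using ptdf_factor[OF assms] .
  have "(\<chi> j. c) = averaging_matrix *v (\<chi> j::'n. c)"
    by (simp add: vec_eq_iff averaging_matrix_mult_vec)
  then have "ptdf src tgt *v (\<chi> j. c) = (incidence src tgt ** (X ** averaging_matrix)) *v (\<chi> j. c)"
    by (metis V matrix_vector_mul_assoc)
  then show ?thesis by (simp add: XJ)
qed

lemma ptdf_potential:
  fixes src tgt :: "'m::finite \<Rightarrow> 'n::finite"
  assumes "\<forall>k. src k \<noteq> tgt k" and "connected_graph src tgt"
  shows "\<exists>\<phi>. \<forall>k. (ptdf src tgt *v y) $ k = \<phi> $ src k - \<phi> $ tgt k"
proof -
  obtain X where "ptdf src tgt = incidence src tgt ** X"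
    using ptdf_factor[OF assms] .
  then have "ptdf src tgt *v y = incidence src tgt *v (X *v y)"
    by (simp add: matrix_vector_mul_assoc)
  then have "\<forall>k. (ptdf src tgt *v y) $ k = (X *v y) $ src k - (X *v y) $ tgt k"
    using assms(1) by (simp add: incidence_mult_vec)
  then show ?thesis by blast
qed

text \<open>The potential of a single injection at \<open>v\<close> is maximal at \<open>v\<close>: at a maximum \<open>u \<noteq> v\<close>
  all terms of Kirchhoff's law are nonnegative, while the net injection is \<open>-1/n\<close>.\<close>

lemma ptdf_injection_inflow_zero:
  fixes src tgt :: "'m::finite \<Rightarrow> 'n::finite"
  assumes loopfree: "\<forall>k. src k \<noteq> tgt k" and conn: "connected_graph src tgt"
    and nonneg: "\<And>k. (ptdf src tgt *v axis v 1) $ k \<ge> 0"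
    and into: "tgt k = v"
  shows "(ptdf src tgt *v axis v 1) $ k = 0"
proof -
  let ?f = "ptdf src tgt *v axis v 1"
  obtain \<phi> where f: "\<And>k. ?f $ k = \<phi> $ src k - \<phi> $ tgt k"
    using ptdf_potential[OF loopfree conn, of "axis v 1"] by blast
  define M where "M = Max (range (\<lambda>w. \<phi> $ w))"
  have "M \<in> range (\<lambda>w. \<phi> $ w)" unfolding M_def by (rule Max_in) auto
  then obtain u where u: "\<phi> $ u = M" by auto
  have max: "\<phi> $ w \<le> \<phi> $ u" for w unfolding u M_def by (rule Max_ge) auto
  have "\<phi> $ v = \<phi> $ u"
  proof (rule ccontr)
    assume "\<phi> $ v \<noteq> \<phi> $ u"
    then have "u \<noteq> v" by auto
    then have "(\<Sum>k\<in>UNIV. incidence src tgt $ k $ u * ?f $ k) = - 1 / real CARD('n)"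
      using ptdf_kirchhoff[OF loopfree conn, of u "axis v 1"] by (simp add: axis_def)
    moreover have "incidence src tgt $ k $ u * ?f $ k \<ge> 0" for k
      using nonneg[of k] f[of k] max[of "src k"] by (auto simp: incidence_def)
    then have "(\<Sum>k\<in>UNIV. incidence src tgt $ k $ u * ?f $ k) \<ge> 0"
      by (simp add: sum_nonneg)
    ultimately show False by simp
  qed
  then have "?f $ k \<le> 0" using f[of k] max[of "src k"] into by simp
  with nonneg[of k] show ?thesis by simp
qed

lemma sum_sq_eq_norm_sq: "(\<Sum>j\<in>UNIV. (x $ j)\<^sup>2) = (norm x)\<^sup>2"
  for x :: "real^'n"
  unfolding power2_norm_eq_inner by (simp add: inner_vec_def power2_eq_square)

lemma norm_diff_power2_le:
  fixes g h :: "real^'n"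
  assumes "norm g \<le> norm h" and "(\<Sum>j\<in>UNIV. g $ j) = (\<Sum>j\<in>UNIV. h $ j)"
  shows "(norm (g - (a *\<^sub>R axis v 1 + b *\<^sub>R (\<chi> j. 1))))\<^sup>2
           \<le> (norm (h - (a *\<^sub>R axis v 1 + b *\<^sub>R (\<chi> j. 1))))\<^sup>2 + 2 * a * (h $ v - g $ v)"
proof -
  define w :: "real^'n" where "w = a *\<^sub>R axis v 1 + b *\<^sub>R (\<chi> j. 1)"
  have inner_w: "inner x w = a * x $ v + b * (\<Sum>j\<in>UNIV. x $ j)" for x
    unfolding w_def inner_add_right inner_scaleR_right
    by (simp add: inner_vec_def axis_def sum_distrib_left if_distrib if_distribR cong: if_cong)
  have expand: "(norm (x - w))\<^sup>2 = (norm x)\<^sup>2 - 2 * inner x w + (norm w)\<^sup>2" for x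
    by (simp add: power2_norm_eq_inner inner_diff_left inner_diff_right inner_commute)
  have "(norm g)\<^sup>2 \<le> (norm h)\<^sup>2" using assms(1) by (simp add: power_mono)
  then show ?thesis
    unfolding w_def[symmetric] expand inner_w using assms(2) by (simp add: algebra_simps)
qed

lemma feasible_closed: "closed (feasible V lam d)"
  unfolding feasible_def matrix_vector_mult_def
  by (intro closed_Collect_conj closed_Collect_all closed_Collect_le closed_Collect_eq
      continuous_intros)

lemma feasible_convex: "convex (feasible V lam d)"
proof (rule convexI)
  fix g h and u v :: real
  assume g: "g \<in> feasible V lam d" and h: "h \<in> feasible V lam d"
    and u: "0 \<le> u" and v: "0 \<le> v" and uv: "u + v = 1"
  have dx: "d - (u *\<^sub>R g + v *\<^sub>R h) = u *\<^sub>R (d - g) + v *\<^sub>R (d - h)"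
    using uv by (simp add: algebra_simps flip: scaleR_add_left)
  have comb: "(V *v (d - (u *\<^sub>R g + v *\<^sub>R h))) $ k
      = u * (V *v (d - g)) $ k + v * (V *v (d - h)) $ k" for k
    unfolding dx by (simp add: matrix_vector_right_distrib matrix_vector_mult_scaleR)
  have between: "a \<le> u * x + v * y \<and> u * x + v * y \<le> b"
    if "a \<le> x" "x \<le> b" "a \<le> y" "y \<le> b" for a b x y :: real
  proof -
    have "u * a + v * a \<le> u * x + v * y" "u * x + v * y \<le> u * b + v * b"
      using that u v by (simp_all add: add_mono mult_left_mono)
    then show ?thesis using uv by (simp flip: distrib_right)
  qed
  have "- lam * \<bar>(V *v d) $ k\<bar> \<le> (V *v (d - (u *\<^sub>R g + v *\<^sub>R h))) $ k
      \<and> (V *v (d - (u *\<^sub>R g + v *\<^sub>R h))) $ k \<le> lam * \<bar>(V *v d) $ k\<bar>" for k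
    using between[of "- lam * \<bar>(V *v d) $ k\<bar>" "(V *v (d - g)) $ k"
        "lam * \<bar>(V *v d) $ k\<bar>" "(V *v (d - h)) $ k"] g h
    by (simp add: feasible_def comb)
  moreover have "(\<Sum>j\<in>UNIV. (u *\<^sub>R g + v *\<^sub>R h) $ j) = (\<Sum>j\<in>UNIV. d $ j)"
    using g h uv by (simp add: feasible_def sum.distrib flip: sum_distrib_left distrib_right)
  moreover have "0 \<le> (u *\<^sub>R g + v *\<^sub>R h) $ j" for j
    using g h u v by (simp add: feasible_def)
  ultimately show "u *\<^sub>R g + v *\<^sub>R h \<in> feasible V lam d"
    unfolding feasible_def by blast
qed

lemma self_feasible:
  assumes "0 \<le> lam" and "\<forall>j. 0 \<le> d $ j"
  shows "d \<in> feasible V lam d"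
  using assms by (simp add: feasible_def)

lemma gstar_eq_closest_point:
  assumes "0 \<le> lam" and "\<forall>j. 0 \<le> d $ j"
  shows "gstar V lam d = closest_point (feasible V lam d) 0"
proof -
  let ?F = "feasible V lam d" and ?p = "closest_point (feasible V lam d) 0"
  have ne: "?F \<noteq> {}" using self_feasible[OF assms] by blast
  have obj_le: "(\<Sum>j\<in>UNIV. (g $ j)\<^sup>2) \<le> (\<Sum>j\<in>UNIV. (h $ j)\<^sup>2)
      \<longleftrightarrow> norm g \<le> norm h" for g h :: "real^'n"
    by (simp add: sum_sq_eq_norm_sq)
  show ?thesis
    unfolding gstar_def
  proof (rule the_equality)
    show "?p \<in> ?F \<and> (\<forall>h\<in>?F. (1/2) * (\<Sum>j\<in>UNIV. (?p $ j)\<^sup>2) \<le> (1/2) * (\<Sum>j\<in>UNIV. (h $ j)\<^sup>2))"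
      using closest_point_exists[OF feasible_closed ne, of 0] by (simp add: obj_le)
  next
    fix g assume "g \<in> ?F \<and> (\<forall>h\<in>?F. (1/2) * (\<Sum>j\<in>UNIV. (g $ j)\<^sup>2) \<le> (1/2) * (\<Sum>j\<in>UNIV. (h $ j)\<^sup>2))"
    then show "g = ?p"
      by (intro closest_point_unique feasible_convex feasible_closed) (auto simp: obj_le)
  qed
qed

lemma gstar_feasible:
  assumes "0 \<le> lam" and "\<forall>j. 0 \<le> d $ j"
  shows "gstar V lam d \<in> feasible V lam d"
proof -
  have "feasible V lam d \<noteq> {}" using self_feasible[OF assms] by blast
  then show ?thesis
    using closest_point_in_set[OF feasible_closed] by (simp add: gstar_eq_closest_point[OF assms])
qed

lemma gstar_norm_le:
  assumes "0 \<le> lam" and "\<forall>j. 0 \<le> d $ j" and "h \<in> feasible V lam d"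
  shows "norm (gstar V lam d) \<le> norm h"
  using closest_point_le[OF feasible_closed assms(3), of 0]
  by (simp add: gstar_eq_closest_point[OF assms(1,2)])

definition proportional_dispatch :: "real \<Rightarrow> real^'n \<Rightarrow> real^'n" where
  "proportional_dispatch lam d
     = (1 - lam) *\<^sub>R d + (lam * (\<Sum>j\<in>UNIV. d $ j) / real CARD('n)) *\<^sub>R (\<chi> j. 1)"

lemma proportional_dispatch_linear:
  "proportional_dispatch lam (x + c *\<^sub>R y)
     = proportional_dispatch lam x + c *\<^sub>R proportional_dispatch lam y"
  by (simp add: proportional_dispatch_def sum.distrib vec_eq_iff algebra_simps add_divide_distrib
      flip: sum_distrib_left)

lemma balanced_mult_proportional_dispatch:
  assumes "V *v (\<chi> j. 1) = 0"
  shows "V *v proportional_dispatch lam d = (1 - lam) *\<^sub>R (V *v d)"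
  using assms
  by (simp add: proportional_dispatch_def matrix_vector_right_distrib matrix_vector_mult_scaleR)

lemma proportional_dispatch_feasible:
  fixes V :: "real^'n^'m" and d :: "real^'n"
  assumes balanced: "V *v (\<chi> j. 1) = 0" and "0 \<le> lam" "lam \<le> 1" and "\<forall>j. 0 \<le> d $ j"
  shows "proportional_dispatch lam d \<in> feasible V lam d"
proof -
  let ?h = "proportional_dispatch lam d"
  have "V *v (d - ?h) = lam *\<^sub>R (V *v d)"
    by (simp add: matrix_vector_mult_diff_distrib balanced_mult_proportional_dispatch[OF balanced]
        algebra_simps)
  moreover have "(\<Sum>j\<in>UNIV. ?h $ j) = (1 - lam) * (\<Sum>j\<in>UNIV. d $ j) + lam * (\<Sum>j\<in>UNIV. d $ j)"
    by (simp add: proportional_dispatch_def sum.distrib flip: sum_distrib_left)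
  then have "(\<Sum>j\<in>UNIV. ?h $ j) = (\<Sum>j\<in>UNIV. d $ j)"
    by (simp add: algebra_simps)
  moreover have "0 \<le> ?h $ j" for j
    using assms(2-4) by (simp add: proportional_dispatch_def sum_nonneg)
  moreover have "- (lam * \<bar>x\<bar>) \<le> lam * x \<and> lam * x \<le> lam * \<bar>x\<bar>" for x :: real
    using assms(2) abs_le_iff[of "lam * x" "lam * \<bar>x\<bar>"] by (auto simp: abs_mult)
  ultimately show ?thesis by (simp add: feasible_def)
qed

text \<open>Kirchhoff's law at \<open>v\<close> turns the line constraints into a bound on \<open>g $ v\<close>: lines leaving
  \<open>v\<close> carry at least \<open>(1 - lam)\<close> times their flow under \<open>d\<close>, lines entering \<open>v\<close> at most
  \<open>(1 + lam)\<close> times.\<close>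

lemma feasible_node_lower_bound:
  fixes src tgt :: "'m::finite \<Rightarrow> 'n::finite"
  assumes loopfree: "\<forall>k. src k \<noteq> tgt k" and conn: "connected_graph src tgt"
    and g: "g \<in> feasible (ptdf src tgt) lam d"
    and flow_nonneg: "\<And>k. 0 \<le> (ptdf src tgt *v d) $ k"
  shows "(1 - lam) * (d $ v - (\<Sum>j\<in>UNIV. d $ j) / real CARD('n))
           - 2 * lam * (\<Sum>k | tgt k = v. (ptdf src tgt *v d) $ k)
         \<le> g $ v - (\<Sum>j\<in>UNIV. d $ j) / real CARD('n)"
proof -
  let ?C = "incidence src tgt" and ?V = "ptdf src tgt"
  let ?inflow = "\<lambda>k. if tgt k = v then (?V *v d) $ k else 0"
  have bounds: "(1 - lam) * (?V *v d) $ k \<le> (?V *v g) $ k \<and> (?V *v g) $ k \<le> (1 + lam) * (?V *v d) $ k"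
    for k
  proof -
    have "- lam * \<bar>(?V *v d) $ k\<bar> \<le> (?V *v (d - g)) $ k \<and> (?V *v (d - g)) $ k \<le> lam * \<bar>(?V *v d) $ k\<bar>"
      using g unfolding feasible_def by blast
    then show ?thesis
      using flow_nonneg[of k] by (simp add: matrix_vector_mult_diff_distrib algebra_simps)
  qed
  have termwise: "(1 - lam) * (?C $ k $ v * (?V *v d) $ k) - 2 * lam * ?inflow k
      \<le> ?C $ k $ v * (?V *v g) $ k" for k
    using bounds[of k] loopfree by (auto simp: incidence_def algebra_simps)
  have "(1 - lam) * (\<Sum>k\<in>UNIV. ?C $ k $ v * (?V *v d) $ k) - 2 * lam * (\<Sum>k\<in>UNIV. ?inflow k)
      \<le> (\<Sum>k\<in>UNIV. ?C $ k $ v * (?V *v g) $ k)"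
    using sum_mono[of UNIV _ "\<lambda>k. ?C $ k $ v * (?V *v g) $ k", OF termwise]
    by (simp add: sum_subtractf sum_distrib_left)
  moreover have "(\<Sum>k\<in>UNIV. ?inflow k) = (\<Sum>k | tgt k = v. (?V *v d) $ k)"
    by (simp add: sum.If_cases)
  moreover have "(\<Sum>j\<in>UNIV. g $ j) = (\<Sum>j\<in>UNIV. d $ j)" using g by (simp add: feasible_def)
  ultimately show ?thesis by (simp add: ptdf_kirchhoff[OF loopfree conn])
qed

lemma gstar_dist_le:
  fixes src tgt :: "'m::finite \<Rightarrow> 'n::finite" and d :: "real^'n"
  assumes loopfree: "\<forall>k. src k \<noteq> tgt k" and conn: "connected_graph src tgt"
    and lam: "0 \<le> lam" "lam \<le> 1" and d_nonneg: "\<forall>j. 0 \<le> d $ j"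
    and flow_d: "\<And>k. 0 \<le> (ptdf src tgt *v d) $ k"
  shows "(norm (gstar (ptdf src tgt) lam d - ((1 - lam) *\<^sub>R axis v 1 + b *\<^sub>R (\<chi> j. 1))))\<^sup>2
         \<le> (norm (proportional_dispatch lam d - ((1 - lam) *\<^sub>R axis v 1 + b *\<^sub>R (\<chi> j. 1))))\<^sup>2
            + 4 * lam * (1 - lam) * (\<Sum>k | tgt k = v. (ptdf src tgt *v d) $ k)"
proof -
  let ?V = "ptdf src tgt"
  let ?g = "gstar ?V lam d" and ?h = "proportional_dispatch lam d"
  have hF: "?h \<in> feasible ?V lam d"
    by (rule proportional_dispatch_feasible[OF ptdf_mult_const[OF loopfree conn] lam d_nonneg])
  have gF: "?g \<in> feasible ?V lam d" by (rule gstar_feasible[OF lam(1) d_nonneg])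
  have "?h $ v - ?g $ v \<le> 2 * lam * (\<Sum>k | tgt k = v. (?V *v d) $ k)"
    using feasible_node_lower_bound[OF loopfree conn gF flow_d, of v]
    by (simp add: proportional_dispatch_def diff_divide_distrib algebra_simps)
  from mult_left_mono[OF this, of "2 * (1 - lam)"]
  have "2 * (1 - lam) * (?h $ v - ?g $ v) \<le> 4 * lam * (1 - lam) * (\<Sum>k | tgt k = v. (?V *v d) $ k)"
    using lam by (simp add: algebra_simps)
  moreover have "norm ?g \<le> norm ?h" by (rule gstar_norm_le[OF lam(1) d_nonneg hF])
  moreover have "(\<Sum>j\<in>UNIV. ?g $ j) = (\<Sum>j\<in>UNIV. ?h $ j)"
    using gF hF by (simp add: feasible_def)
  ultimately show ?thesis using norm_diff_power2_le[of ?g ?h "1 - lam" v b] by linarith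
qed

lemma gstar_near_proportional_dispatch:
  fixes src tgt :: "'m::finite \<Rightarrow> 'n::finite" and \<gamma> :: "real^'n"
  assumes loopfree: "\<forall>k. src k \<noteq> tgt k" and conn: "connected_graph src tgt"
    and lam: "0 \<le> lam" "lam \<le> 1" and \<gamma>_nonneg: "\<forall>j. 0 \<le> \<gamma> $ j"
    and eps: "0 \<le> \<epsilon>" "\<epsilon> \<le> 1"
    and flow_d: "\<And>k. 0 \<le> (ptdf src tgt *v (axis v 1 + \<epsilon> *\<^sub>R \<gamma>)) $ k"
    and flow_v: "\<And>k. 0 \<le> (ptdf src tgt *v axis v 1) $ k"
  shows "(norm (gstar (ptdf src tgt) lam (axis v 1 + \<epsilon> *\<^sub>R \<gamma>)
                 - proportional_dispatch lam (axis v 1)))\<^sup>2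
         \<le> \<epsilon> * (4 * lam * (1 - lam) * (\<Sum>k | tgt k = v. (ptdf src tgt *v \<gamma>) $ k)
                + (norm (proportional_dispatch lam \<gamma>))\<^sup>2)"
proof -
  let ?V = "ptdf src tgt" and ?e = "axis v 1 :: real^'n"
  define d where "d = ?e + \<epsilon> *\<^sub>R \<gamma>"
  define T where "T = (\<Sum>k | tgt k = v. (?V *v \<gamma>) $ k)"
  have d_nonneg: "\<forall>j. 0 \<le> d $ j" using \<gamma>_nonneg eps by (simp add: d_def axis_def)
  have w: "(1 - lam) *\<^sub>R ?e + (lam / real CARD('n)) *\<^sub>R (\<chi> j. 1) = proportional_dispatch lam ?e"
    by (simp add: proportional_dispatch_def axis_def)
  have "(?V *v d) $ k = \<epsilon> * (?V *v \<gamma>) $ k" if "tgt k = v" for k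
    using ptdf_injection_inflow_zero[OF loopfree conn flow_v that]
    by (simp add: d_def matrix_vector_right_distrib matrix_vector_mult_scaleR)
  then have inflow: "4 * lam * (1 - lam) * (\<Sum>k | tgt k = v. (?V *v d) $ k)
      = \<epsilon> * (4 * lam * (1 - lam) * T)"
    by (simp add: T_def sum_distrib_left mult_ac)
  have "(norm (gstar ?V lam d - proportional_dispatch lam ?e))\<^sup>2
      \<le> (norm (proportional_dispatch lam d - proportional_dispatch lam ?e))\<^sup>2
         + \<epsilon> * (4 * lam * (1 - lam) * T)"
    using gstar_dist_le[OF loopfree conn lam d_nonneg flow_d[folded d_def], of v "lam / real CARD('n)"]
    unfolding w inflow .
  also have "\<dots> = \<epsilon>\<^sup>2 * (norm (proportional_dispatch lam \<gamma>))\<^sup>2 + \<epsilon> * (4 * lam * (1 - lam) * T)"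
    using eps by (simp add: d_def proportional_dispatch_linear power_mult_distrib)
  also have "\<dots> \<le> \<epsilon> * (4 * lam * (1 - lam) * T + (norm (proportional_dispatch lam \<gamma>))\<^sup>2)"
    using eps by (simp add: power2_eq_square distrib_left mult_left_le_one_le mult_right_mono)
  finally show ?thesis by (simp add: d_def T_def)
qed

lemma gstar_tendsto_proportional_dispatch:
  fixes src tgt :: "'m::finite \<Rightarrow> 'n::finite" and \<gamma> :: "real^'n"
  assumes loopfree: "\<forall>k. src k \<noteq> tgt k" and conn: "connected_graph src tgt"
    and lam: "0 \<le> lam" "lam \<le> 1" and \<gamma>_nonneg: "\<forall>j. 0 \<le> \<gamma> $ j"
    and flow: "\<exists>\<delta>>0. \<forall>\<epsilon>. 0 \<le> \<epsilon> \<and> \<epsilon> \<le> \<delta> \<longrightarrow>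
                 (\<forall>k. (ptdf src tgt *v (axis v 1 + \<epsilon> *\<^sub>R \<gamma>)) $ k \<ge> 0)"
  shows "((\<lambda>\<epsilon>. gstar (ptdf src tgt) lam (axis v 1 + \<epsilon> *\<^sub>R \<gamma>))
           \<longlongrightarrow> proportional_dispatch lam (axis v 1)) (at_right 0)"
proof -
  let ?g = "\<lambda>\<epsilon>. gstar (ptdf src tgt) lam (axis v 1 + \<epsilon> *\<^sub>R \<gamma>)"
    and ?w = "proportional_dispatch lam (axis v 1)"
  obtain \<delta> where \<delta>: "0 < \<delta>"
    and flow_d: "\<And>\<epsilon> k. 0 \<le> \<epsilon> \<Longrightarrow> \<epsilon> \<le> \<delta> \<Longrightarrow> 0 \<le> (ptdf src tgt *v (axis v 1 + \<epsilon> *\<^sub>R \<gamma>)) $ k"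
    using flow by blast
  have flow_v: "\<And>k. 0 \<le> (ptdf src tgt *v axis v 1) $ k" using flow_d[of 0] \<delta> by simp
  define K where "K = 4 * lam * (1 - lam) * (\<Sum>k | tgt k = v. (ptdf src tgt *v \<gamma>) $ k)
      + (norm (proportional_dispatch lam \<gamma>))\<^sup>2"
  have "\<forall>\<^sub>F \<epsilon> in at_right 0. 0 < \<epsilon> \<and> \<epsilon> < min \<delta> 1"
    unfolding eventually_at_right_field using \<delta> by (intro exI[of _ "min \<delta> 1"]) auto
  then have close: "\<forall>\<^sub>F \<epsilon> in at_right 0. norm (?g \<epsilon> - ?w) \<le> sqrt (\<epsilon> * K)"
  proof (rule eventually_mono)
    fix \<epsilon> :: real assume \<epsilon>: "0 < \<epsilon> \<and> \<epsilon> < min \<delta> 1"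
    have "(norm (?g \<epsilon> - ?w))\<^sup>2 \<le> \<epsilon> * K"
      unfolding K_def
      by (rule gstar_near_proportional_dispatch[OF loopfree conn lam \<gamma>_nonneg _ _ _ flow_v])
        (use \<epsilon> flow_d in auto)
    then show "norm (?g \<epsilon> - ?w) \<le> sqrt (\<epsilon> * K)" by (rule real_le_rsqrt)
  qed
  have "((\<lambda>\<epsilon>. \<epsilon> * K) \<longlongrightarrow> 0 * K) (at_right 0)"
    by (intro tendsto_mult tendsto_ident_at tendsto_const)
  then have "((\<lambda>\<epsilon>. sqrt (\<epsilon> * K)) \<longlongrightarrow> 0) (at_right 0)"
    using tendsto_real_sqrt by fastforce
  then show ?thesis by (rule LIM_zero_cancel[OF Lim_null_comparison[OF close]])
qed

theorem mainTheorem10: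
  fixes src tgt :: "'m::finite \<Rightarrow> 'n::finite"
    and n1 :: 'n and lam :: real and \<gamma> :: "real^'n" and i :: 'm
  assumes "simple_oriented_graph src tgt"
    and "connected_graph src tgt"
    and "0 < lam" and "lam < 1"
    and "\<gamma> \<in> Gamma_set n1"
    and "\<exists>\<delta>>0. \<forall>\<epsilon>. 0 \<le> \<epsilon> \<and> \<epsilon> \<le> \<delta> \<longrightarrow>
           (\<forall>k. (ptdf src tgt *v (axis n1 1 + \<epsilon> *\<^sub>R \<gamma>)) $ k \<ge> 0)"
    and "(ptdf src tgt *v axis n1 1) $ i > 0"
  shows "\<forall>\<^sub>F \<epsilon> in at_right 0.
           (ptdf src tgt *v gstar (ptdf src tgt) lam (axis n1 1 + \<epsilon> *\<^sub>R \<gamma>)) $ i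
             < (1 + lam) * (ptdf src tgt *v (axis n1 1 + \<epsilon> *\<^sub>R \<gamma>)) $ i"
proof -
  let ?V = "ptdf src tgt" and ?e = "axis n1 1 :: real^'n"
  have loopfree: "\<forall>k. src k \<noteq> tgt k"
    using assms(1) by (simp add: simple_oriented_graph_def)
  have "((\<lambda>\<epsilon>. gstar ?V lam (?e + \<epsilon> *\<^sub>R \<gamma>)) \<longlongrightarrow> proportional_dispatch lam ?e) (at_right 0)"
    using gstar_tendsto_proportional_dispatch[OF loopfree assms(2)] assms(3-6)
    by (simp add: Gamma_set_def)
  then have "((\<lambda>\<epsilon>. (?V *v gstar ?V lam (?e + \<epsilon> *\<^sub>R \<gamma>)) $ i)
      \<longlongrightarrow> (?V *v proportional_dispatch lam ?e) $ i) (at_right 0)"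
    by (intro tendsto_vec_nth bounded_linear.tendsto[OF matrix_vector_mul_bounded_linear])
  then have lhs: "((\<lambda>\<epsilon>. (?V *v gstar ?V lam (?e + \<epsilon> *\<^sub>R \<gamma>)) $ i)
      \<longlongrightarrow> (1 - lam) * (?V *v ?e) $ i) (at_right 0)"
    by (simp add: balanced_mult_proportional_dispatch ptdf_mult_const[OF loopfree assms(2)])
  have rhs: "((\<lambda>\<epsilon>. (1 + lam) * (?V *v (?e + \<epsilon> *\<^sub>R \<gamma>)) $ i)
      \<longlongrightarrow> (1 + lam) * (?V *v ?e) $ i) (at_right 0)"
    by (auto intro!: tendsto_eq_intros simp: matrix_vector_right_distrib matrix_vector_mult_scaleR)
  have "(1 - lam) * (?V *v ?e) $ i < (1 + lam) * (?V *v ?e) $ i"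
    using assms(3,7) by simp
  then have "\<forall>\<^sub>F \<epsilon> in at_right 0. 0 < (1 + lam) * (?V *v (?e + \<epsilon> *\<^sub>R \<gamma>)) $ i
      - (?V *v gstar ?V lam (?e + \<epsilon> *\<^sub>R \<gamma>)) $ i"
    by (intro order_tendstoD(1)[OF tendsto_diff[OF rhs lhs]]) simp
  then show ?thesis by (rule eventually_mono) simp
qed

end
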